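(* Let $k$ be a field, $V$ a $k$-vector space, $\varphi\in\operatorname{End}_k(V)$ a finite potent endomorphism with index $i(\varphi)=r$ and AST-decomposition $V=W_\varphi\oplus U_\varphi$. If $\psi\in\operatorname{End}_k(V)$ is a G-Drazin inverse of $\varphi$, then $W_\varphi$ and $U_\varphi$ are invariant under $\psi$.
   Context: An endomorphism $\varphi$ of a $k$-vector space $V$ is finite potent if $\varphi^n(V)$ is finite dimensional for some $n$. For such $\varphi$, the AST-decomposition is $V=U_\varphi\oplus W_\varphi$ where $U_\varphi=\{v\in V: \varphi^m(v)=0 \text{ for some } m\}$ and $W_\varphi=\{v\in V: p(\varphi)(v)=0 \text{ for some } p(x)\in k[x] \text{ coprime to } x\}$; both are $\varphi$-invariant, $\varphi|_{U_\varphi}$ is nilpotent, $W_\varphi$ is finite dimensional and $\varphi|_{W_\varphi}$ is an automorphism. The index $i(\varphi)$ is the nilpotency order of $\varphi|_{U_\varphi}$. An endomorphism $\psi\in\operatorname{End}_k(V)$ is a G-Drazin inverse of $\varphi$ if $\varphi\circ\psi\circ\varphi=\varphi$ and $\psi\circ\varphi^{r}=\varphi^{r}\circ\psi$, where $r=i(\varphi)$. *)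

theory Defs
  imports Main "HOL-Computational_Algebra.Polynomial"
begin

text \<open>Vector spaces are modelled by the library locale vector_space with a
scalar multiplication scale :: 'k \<Rightarrow> 'v \<Rightarrow> 'v over a field 'k;
the whole type 'v is the space V; endomorphisms are linear maps 'v \<Rightarrow> 'v.\<close>

definition poly_endo :: "('k::field \<Rightarrow> 'v::ab_group_add \<Rightarrow> 'v) \<Rightarrow> 'k poly \<Rightarrow> ('v \<Rightarrow> 'v) \<Rightarrow> 'v \<Rightarrow> 'v" where
  "poly_endo scale p phi v = (\<Sum>i\<le>degree p. scale (coeff p i) ((phi ^^ i) v))"

definition finite_potent :: "('k::field \<Rightarrow> 'v::ab_group_add \<Rightarrow> 'v) \<Rightarrow> ('v \<Rightarrow> 'v) \<Rightarrow> bool" where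
  "finite_potent scale phi \<longleftrightarrow>
     Vector_Spaces.linear scale scale phi \<and>
     (\<exists>n. \<exists>B. finite B \<and> module.span scale B = range (phi ^^ n))"

definition U_part :: "('v::zero \<Rightarrow> 'v) \<Rightarrow> 'v set" where
  "U_part phi = {v. \<exists>m. (phi ^^ m) v = 0}"

definition W_part :: "('k::field \<Rightarrow> 'v::ab_group_add \<Rightarrow> 'v) \<Rightarrow> ('v \<Rightarrow> 'v) \<Rightarrow> 'v set" where
  "W_part scale phi = {v. \<exists>p::'k poly. coprime p [:0, 1:] \<and> poly_endo scale p phi v = 0}"

definition fp_index :: "('v::zero \<Rightarrow> 'v) \<Rightarrow> nat" where
  "fp_index phi = (LEAST m. \<forall>u \<in> U_part phi. (phi ^^ m) u = 0)"

definition G_Drazin_inverse :: "('k::field \<Rightarrow> 'v::ab_group_add \<Rightarrow> 'v) \<Rightarrow> ('v \<Rightarrow> 'v) \<Rightarrow> ('v \<Rightarrow> 'v) \<Rightarrow> bool" where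
  "G_Drazin_inverse scale phi psi \<longleftrightarrow>
     Vector_Spaces.linear scale scale psi \<and>
     phi \<circ> psi \<circ> phi = phi \<and>
     psi \<circ> (phi ^^ fp_index phi) = (phi ^^ fp_index phi) \<circ> psi"

end

(* For finite potent phi of index r, the AST-decomposition is read off phi^r: W is the range
   of phi^r and U its kernel. A polynomial coprime to x is invertible modulo every x^m, so W lies
   in every phi^m(V) and meets every ker phi^m trivially. Finite potency gives each vector an
   annihilating polynomial of uniformly bounded degree; splitting off its power of x yields
   V = W + ker phi^N for a single N. This bounds the nilpotency order on U, so r exists, and
   gives phi^r(V) = phi^r(W), which lies in W. Any psi commuting with phi^r preserves both the
   range and the kernel of phi^r. *)
theory Submission
  imports Defs "HOL-Computational_Algebra.Polynomial_Factorial"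
begin

lemma X_dvd_iff_poly_0: "[:0, 1:] dvd (p :: 'a::comm_ring_1 poly) \<longleftrightarrow> poly p 0 = 0"
  using dvd_iff_poly_eq_0[of 0 p] by simp

lemma X_power_bezout:
  fixes g :: "'a::field poly"
  assumes "poly g 0 \<noteq> 0"
  obtains a b where "a * g + b * [:0, 1:] ^ m = 1"
proof -
  define c where "c = poly g 0"
  have "c \<noteq> 0"
    using assms by (simp add: c_def)
  \<comment> \<open>x divides t, so the geometric series of t inverts 1 - t = g / c modulo t^m, a multiple of x^m\<close>
  define t where "t = 1 - smult (1 / c) g"
  have "[:0, 1:] dvd t"
    using \<open>c \<noteq> 0\<close> by (simp add: dvd_iff_poly_eq_0 t_def c_def)
  then obtain s where s: "t = [:0, 1:] * s" ..
  have "smult (1 / c) g = 1 - t"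
    using \<open>c \<noteq> 0\<close> by (simp add: t_def)
  then have "smult (1 / c) (\<Sum>i<m. t ^ i) * g = (1 - t) * (\<Sum>i<m. t ^ i)"
    by (metis mult.commute mult_smult_right)
  moreover have "s ^ m * [:0, 1:] ^ m = t ^ m"
    by (simp only: s power_mult_distrib mult.commute)
  ultimately have "smult (1 / c) (\<Sum>i<m. t ^ i) * g + s ^ m * [:0, 1:] ^ m = 1"
    by (simp only: one_diff_power_eq[symmetric] diff_add_cancel)
  then show ?thesis
    by (rule that)
qed

lemma coprime_X_iff_poly_0:
  fixes p :: "'a::field poly"
  shows "coprime p [:0, 1:] \<longleftrightarrow> poly p 0 \<noteq> 0"
proof
  assume "coprime p [:0, 1:]"
  moreover have "\<not> is_unit ([:0, 1:] :: 'a poly)"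
    using is_unit_iff_degree[of "[:0, 1:] :: 'a poly"] by simp
  ultimately show "poly p 0 \<noteq> 0"
    using coprime_common_divisor[of p "[:0, 1:]" "[:0, 1:]"] by (auto simp: X_dvd_iff_poly_0)
next
  assume "poly p 0 \<noteq> 0"
  then obtain a b where ab: "a * p + b * [:0, 1:] ^ 1 = 1"
    by (rule X_power_bezout)
  show "coprime p [:0, 1:]"
  proof (rule coprimeI)
    fix d
    assume "d dvd p" "d dvd [:0, 1:]"
    then have "d dvd a * p + b * [:0, 1:] ^ 1"
      by (simp only: power_one_right dvd_add dvd_mult)
    then show "is_unit d"
      by (simp only: ab)
  qed
qed

lemma coprime_X_power_bezout:
  fixes g :: "'a::field poly"
  assumes "coprime g [:0, 1:]"
  obtains a b where "a * g + b * [:0, 1:] ^ m = 1"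
  using X_power_bezout assms coprime_X_iff_poly_0 by blast


context vector_space
begin

lemma poly_endo_eq_sum_atMost:
  assumes "degree p \<le> N"
  shows "poly_endo scale p phi v = (\<Sum>i\<le>N. scale (coeff p i) ((phi ^^ i) v))"
  unfolding poly_endo_def
  by (rule sum.mono_neutral_left) (use assms in \<open>auto intro: coeff_eq_0\<close>)

lemma poly_endo_0 [simp]: "poly_endo scale 0 phi v = 0"
  by (simp add: poly_endo_def)

lemma poly_endo_1 [simp]: "poly_endo scale 1 phi v = v"
  by (simp add: poly_endo_def)

lemma poly_endo_monom: "poly_endo scale (monom c k) phi v = scale c ((phi ^^ k) v)"
  by (simp add: poly_endo_eq_sum_atMost[OF degree_monom_le] if_distrib[of "\<lambda>c. scale c _"] cong: if_cong)

lemma poly_endo_X_power [simp]: "poly_endo scale ([:0, 1:] ^ k) phi v = (phi ^^ k) v"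
  using poly_endo_monom[of 1 k] by (simp add: monom_altdef)

lemma poly_endo_add:
  "poly_endo scale (p + q) phi v = poly_endo scale p phi v + poly_endo scale q phi v"
proof -
  let ?N = "max (degree p) (degree q)"
  have "degree (p + q) \<le> ?N"
    by (rule degree_add_le) auto
  then show ?thesis
    by (simp add: poly_endo_eq_sum_atMost[of _ ?N] scale_left_distrib sum.distrib)
qed

lemma poly_endo_smult: "poly_endo scale (smult c p) phi v = scale c (poly_endo scale p phi v)"
  by (simp add: poly_endo_eq_sum_atMost[of _ "degree p"] scale_sum_right)

lemma poly_endo_sum:
  "finite A \<Longrightarrow> poly_endo scale (\<Sum>a\<in>A. p a) phi v = (\<Sum>a\<in>A. poly_endo scale (p a) phi v)"
  by (induction A rule: finite_induct) (auto simp: poly_endo_add)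

lemma dependent_family_in_span:
  assumes "finite B" "\<And>i. i \<le> d \<Longrightarrow> f i \<in> span B" "card B \<le> d"
  obtains c where "\<exists>i\<le>d. c i \<noteq> 0" "(\<Sum>i\<le>d. scale (c i) (f i)) = 0"
proof (cases "inj_on f {..d}")
  case True
  have "card (f ` {..d}) > card B"
    using True assms(3) by (simp add: card_image)
  then have "dependent (f ` {..d})"
    using independent_span_bound[OF assms(1)] assms(2) by fastforce
  then obtain u where u: "\<exists>v\<in>f ` {..d}. u v \<noteq> 0" "(\<Sum>v\<in>f ` {..d}. scale (u v) v) = 0"
    by (auto simp: dependent_finite)
  have "\<exists>i\<le>d. u (f i) \<noteq> 0"
    using u(1) by auto
  moreover have "(\<Sum>i\<le>d. scale (u (f i)) (f i)) = 0"
    using u(2) sum.reindex_cong[OF True refl refl, of "\<lambda>v. scale (u v) v"] by simp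
  ultimately show ?thesis
    by (rule that[of "\<lambda>i. u (f i)"])
next
  case False
  then obtain i j where "i \<le> d" "j \<le> d" "i \<noteq> j" "f i = f j"
    by (auto simp: inj_on_def)
  have pick: "(\<Sum>k\<le>d. scale (of_bool (k = l)) (f k)) = f l" if "l \<le> d" for l
  proof -
    have "scale (of_bool (k = l)) (f k) = (if k = l then f k else 0)" for k
      by simp
    then show ?thesis
      using that by simp
  qed
  have "\<exists>k\<le>d. of_bool (k = i) - of_bool (k = j) \<noteq> (0::'a)"
    using \<open>i \<le> d\<close> \<open>i \<noteq> j\<close> by (intro exI[of _ i]) simp
  moreover have "(\<Sum>k\<le>d. scale (of_bool (k = i) - of_bool (k = j)) (f k)) = 0"
    using \<open>i \<le> d\<close> \<open>j \<le> d\<close> \<open>f i = f j\<close>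
    by (simp only: scale_left_diff_distrib sum_subtractf pick diff_self)
  ultimately show ?thesis
    by (rule that[of "\<lambda>k. of_bool (k = i) - of_bool (k = j)"])
qed

lemma annihilating_poly_of_orbit_in_span:
  assumes "finite B" "\<And>i. (phi ^^ i) y \<in> span B"
  obtains f where "f \<noteq> 0" "degree f \<le> card B" "poly_endo scale f phi y = 0"
proof -
  let ?d = "card B"
  obtain c where c: "\<exists>i\<le>?d. c i \<noteq> 0" "(\<Sum>i\<le>?d. scale (c i) ((phi ^^ i) y)) = 0"
    by (rule dependent_family_in_span[OF assms(1) assms(2) order_refl])
  define f where "f = (\<Sum>i\<le>?d. monom (c i) i)"
  have coeff_f: "coeff f i = (if i \<le> ?d then c i else 0)" for i
    by (simp add: f_def coeff_sum)
  show ?thesis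
  proof
    from c(1) obtain i where "i \<le> ?d" "c i \<noteq> 0"
      by blast
    then have "coeff f i \<noteq> 0"
      by (simp add: coeff_f)
    then show "f \<noteq> 0"
      by auto
    show "degree f \<le> ?d"
      by (rule degree_le) (simp add: coeff_f)
    show "poly_endo scale f phi y = 0"
      using c(2) by (simp add: f_def poly_endo_sum poly_endo_monom)
  qed
qed

end

locale endomorphism = vector_space scale
  for scale :: "'k::field \<Rightarrow> 'v::ab_group_add \<Rightarrow> 'v" +
  fixes phi :: "'v \<Rightarrow> 'v"
  assumes linear_phi: "Vector_Spaces.linear scale scale phi"
begin

sublocale phi: Vector_Spaces.linear scale scale phi
  by (fact linear_phi)

lemma linear_funpow: "Vector_Spaces.linear scale scale (phi ^^ k)"
  by (induction k) (auto simp only: funpow.simps intro: linear_id Vector_Spaces.linear_compose linear_phi)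

lemma funpow_0 [simp]: "(phi ^^ k) 0 = 0"
  using module_hom.zero[OF module_hom_linearI[OF linear_funpow]] .

lemma funpow_diff: "(phi ^^ k) (x - y) = (phi ^^ k) x - (phi ^^ k) y"
  using module_hom.diff[OF module_hom_linearI[OF linear_funpow]] .

lemma funpow_eq_0_mono:
  assumes "(phi ^^ k) u = 0" "k \<le> m"
  shows "(phi ^^ m) u = 0"
proof -
  have "phi ^^ m = phi ^^ (m - k) \<circ> phi ^^ k"
    using assms(2) by (simp flip: funpow_add)
  then show ?thesis
    using assms(1) by simp
qed

lemma poly_endo_pCons:
  "poly_endo scale (pCons a p) phi v = scale a v + phi (poly_endo scale p phi v)"
proof -
  have "poly_endo scale (pCons a p) phi v
      = (\<Sum>i\<le>Suc (degree p). scale (coeff (pCons a p) i) ((phi ^^ i) v))"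
    by (rule poly_endo_eq_sum_atMost) (simp add: degree_pCons_le)
  also have "\<dots> = scale a v + (\<Sum>i\<le>degree p. scale (coeff p i) (phi ((phi ^^ i) v)))"
    by (simp add: sum.atMost_Suc_shift del: sum.atMost_Suc)
  also have "\<dots> = scale a v + phi (poly_endo scale p phi v)"
    by (simp add: poly_endo_def phi.sum phi.scale)
  finally show ?thesis .
qed

lemma poly_endo_mult:
  "poly_endo scale (p * q) phi v = poly_endo scale p phi (poly_endo scale q phi v)"
  by (induction p) (simp_all add: poly_endo_add poly_endo_smult poly_endo_pCons)

lemma poly_endo_commute:
  "poly_endo scale p phi (poly_endo scale q phi v) = poly_endo scale q phi (poly_endo scale p phi v)"
  by (metis poly_endo_mult mult.commute)

lemma poly_endo_apply_0 [simp]: "poly_endo scale p phi 0 = 0"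
  by (induction p) (simp_all add: poly_endo_pCons)

lemma W_part_eq_poly_endo_funpow:
  assumes "w \<in> W_part scale phi"
  obtains b where "w = poly_endo scale b phi ((phi ^^ m) w)"
proof -
  obtain g where g: "coprime g [:0, 1:]" "poly_endo scale g phi w = 0"
    using assms unfolding W_part_def by blast
  obtain a b where ab: "a * g + b * [:0, 1:] ^ m = 1"
    using g(1) by (rule coprime_X_power_bezout)
  have "w = poly_endo scale (a * g + b * [:0, 1:] ^ m) phi w"
    by (simp add: ab)
  also have "\<dots> = poly_endo scale b phi ((phi ^^ m) w)"
    by (simp add: poly_endo_add poly_endo_mult g(2))
  finally show ?thesis
    by (rule that)
qed

lemma W_part_funpow_eq_0:
  assumes "w \<in> W_part scale phi" "(phi ^^ m) w = 0"
  shows "w = 0"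
  using assms by (metis W_part_eq_poly_endo_funpow poly_endo_apply_0)

lemma W_part_subset_range_funpow: "W_part scale phi \<subseteq> range (phi ^^ m)"
proof
  fix w
  assume "w \<in> W_part scale phi"
  then obtain b where "w = poly_endo scale b phi ((phi ^^ m) w)"
    by (rule W_part_eq_poly_endo_funpow)
  also have "\<dots> = (phi ^^ m) (poly_endo scale b phi w)"
    using poly_endo_commute[of b "[:0, 1:] ^ m"] by simp
  finally show "w \<in> range (phi ^^ m)"
    by blast
qed

lemma funpow_W_part:
  assumes "w \<in> W_part scale phi"
  shows "(phi ^^ m) w \<in> W_part scale phi"
proof -
  obtain g where g: "coprime g [:0, 1:]" "poly_endo scale g phi w = 0"
    using assms unfolding W_part_def by blast
  have "poly_endo scale g phi ((phi ^^ m) w) = 0"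
    using poly_endo_commute[of g "[:0, 1:] ^ m"] g(2) by simp
  with g(1) show ?thesis
    unfolding W_part_def by blast
qed

lemma W_part_plus_kernel_of_annihilator:
  assumes "F \<noteq> 0" "poly_endo scale F phi v = 0"
  obtains w u where "v = w + u" "w \<in> W_part scale phi" "(phi ^^ degree F) u = 0"
proof -
  define j where "j = order 0 F"
  obtain g where F: "F = [:0, 1:] ^ j * g" and "\<not> [:0, 1:] dvd g"
    using order_decomp[OF assms(1), of 0] by (auto simp: j_def)
  then have "poly g 0 \<noteq> 0"
    by (simp add: X_dvd_iff_poly_0)
  then obtain a b where ab: "a * g + b * [:0, 1:] ^ j = 1"
    by (rule X_power_bezout)
  define w where "w = poly_endo scale (b * [:0, 1:] ^ j) phi v"
  define u where "u = poly_endo scale (a * g) phi v"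
  have "v = poly_endo scale (a * g + b * [:0, 1:] ^ j) phi v"
    by (simp add: ab)
  then have "v = w + u"
    by (simp add: w_def u_def poly_endo_add add.commute)
  moreover have "poly_endo scale g phi w = poly_endo scale (b * F) phi v"
    unfolding w_def F poly_endo_mult[symmetric] by (simp only: ac_simps)
  then have "w \<in> W_part scale phi"
    using \<open>poly g 0 \<noteq> 0\<close> assms(2)
    by (auto simp: W_part_def coprime_X_iff_poly_0 poly_endo_mult)
  moreover have "(phi ^^ j) u = poly_endo scale (a * F) phi v"
    unfolding u_def F poly_endo_X_power[symmetric] poly_endo_mult[symmetric] by (simp only: ac_simps)
  then have "(phi ^^ j) u = 0"
    using assms(2) by (simp add: poly_endo_mult)
  then have "(phi ^^ degree F) u = 0"
    by (rule funpow_eq_0_mono) (simp add: j_def order_degree[OF assms(1)])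
  ultimately show ?thesis
    by (rule that)
qed

lemma finite_potent_W_part_plus_kernel:
  assumes "finite B" "span B = range (phi ^^ n)"
  obtains w u where "v = w + u" "w \<in> W_part scale phi" "(phi ^^ (n + card B)) u = 0"
proof -
  have "(phi ^^ i) ((phi ^^ n) v) = (phi ^^ n) ((phi ^^ i) v)" for i
    using fun_cong[OF funpow_add[of i n phi]] fun_cong[OF funpow_add[of n i phi]]
    by (simp add: add.commute)
  then have "(phi ^^ i) ((phi ^^ n) v) \<in> span B" for i
    using assms(2) by simp
  with assms(1) obtain f where f: "f \<noteq> 0" "degree f \<le> card B"
    "poly_endo scale f phi ((phi ^^ n) v) = 0"
    by (rule annihilating_poly_of_orbit_in_span)
  define F where "F = f * [:0, 1:] ^ n"
  have "F \<noteq> 0"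
    using f(1) by (simp add: F_def)
  moreover have "poly_endo scale F phi v = 0"
    using f(3) by (simp add: F_def poly_endo_mult)
  ultimately obtain w u where "v = w + u" "w \<in> W_part scale phi" "(phi ^^ degree F) u = 0"
    by (rule W_part_plus_kernel_of_annihilator)
  moreover have "degree F \<le> n + card B"
    using f(1,2) by (simp add: F_def degree_mult_eq degree_linear_power)
  ultimately show ?thesis
    using funpow_eq_0_mono that by blast
qed

lemma finite_potent_U_part_nilpotent:
  assumes "finite_potent scale phi"
  obtains N where "\<forall>u \<in> U_part phi. (phi ^^ N) u = 0"
proof -
  obtain n B where B: "finite B" "span B = range (phi ^^ n)"
    using assms unfolding finite_potent_def by blast
  define N where "N = n + card B"
  have "\<forall>u \<in> U_part phi. (phi ^^ N) u = 0"
  proof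
    fix u
    assume "u \<in> U_part phi"
    then obtain m where m: "(phi ^^ m) u = 0"
      unfolding U_part_def by blast
    obtain w u' where wu: "u = w + u'" "w \<in> W_part scale phi" "(phi ^^ N) u' = 0"
      using B unfolding N_def by (rule finite_potent_W_part_plus_kernel)
    have "(phi ^^ (m + N)) w = (phi ^^ (m + N)) u - (phi ^^ (m + N)) u'"
      using wu(1) by (simp flip: funpow_diff)
    also have "\<dots> = 0"
      using funpow_eq_0_mono[OF m] funpow_eq_0_mono[OF wu(3)] by simp
    finally have "w = 0"
      using wu(2) W_part_funpow_eq_0 by blast
    with wu show "(phi ^^ N) u = 0"
      by simp
  qed
  then show ?thesis
    by (rule that)
qed

lemma U_part_eq_kernel_fp_index:
  assumes "finite_potent scale phi"
  shows "U_part phi = {v. (phi ^^ fp_index phi) v = 0}"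
proof -
  obtain N where "\<forall>u \<in> U_part phi. (phi ^^ N) u = 0"
    using assms by (rule finite_potent_U_part_nilpotent)
  then have "\<forall>u \<in> U_part phi. (phi ^^ fp_index phi) u = 0"
    unfolding fp_index_def by (rule LeastI)
  then show ?thesis
    unfolding U_part_def by blast
qed

lemma range_fp_index_eq_W_part:
  assumes "finite_potent scale phi"
  shows "range (phi ^^ fp_index phi) = W_part scale phi"
proof
  show "W_part scale phi \<subseteq> range (phi ^^ fp_index phi)"
    by (rule W_part_subset_range_funpow)
next
  show "range (phi ^^ fp_index phi) \<subseteq> W_part scale phi"
  proof clarify
    fix v
    obtain n B where B: "finite B" "span B = range (phi ^^ n)"
      using assms unfolding finite_potent_def by blast
    then obtain w u where wu: "v = w + u" "w \<in> W_part scale phi" "(phi ^^ (n + card B)) u = 0"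
      by (rule finite_potent_W_part_plus_kernel)
    then have "(phi ^^ fp_index phi) u = 0"
      using U_part_eq_kernel_fp_index[OF assms] unfolding U_part_def by blast
    then have "(phi ^^ fp_index phi) v = (phi ^^ fp_index phi) w"
      using funpow_diff[of _ v u] wu(1) by simp
    then show "(phi ^^ fp_index phi) v \<in> W_part scale phi"
      using funpow_W_part[OF wu(2)] by simp
  qed
qed

end

theorem corollary3p3:
  fixes scale :: "'k::field \<Rightarrow> 'v::ab_group_add \<Rightarrow> 'v"
    and phi psi :: "'v \<Rightarrow> 'v"
  assumes "vector_space scale"
    and "finite_potent scale phi"
    and "G_Drazin_inverse scale phi psi"
  shows "psi ` W_part scale phi \<subseteq> W_part scale phi \<and> psi ` U_part phi \<subseteq> U_part phi"
proof -
  interpret endomorphism scale phi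
    using assms(1,2) by (simp add: endomorphism_def endomorphism_axioms_def finite_potent_def)
  define r where "r = fp_index phi"
  interpret psi: Vector_Spaces.linear scale scale psi
    using assms(3) by (simp add: G_Drazin_inverse_def)
  have comm: "psi ((phi ^^ r) v) = (phi ^^ r) (psi v)" for v
    using assms(3) unfolding G_Drazin_inverse_def r_def by (metis comp_apply)
  have "psi ` range (phi ^^ r) \<subseteq> range (phi ^^ r)"
    by (auto simp: comm)
  moreover have "psi ` {v. (phi ^^ r) v = 0} \<subseteq> {v. (phi ^^ r) v = 0}"
    by (auto simp flip: comm)
  ultimately show ?thesis
    using range_fp_index_eq_W_part[OF assms(2)] U_part_eq_kernel_fp_index[OF assms(2)]
    by (simp add: r_def)
qed

end
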